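(* Let $R$ be a commutative ring, $n\ge 5$ and $d\ge1$. The assignment $(\Delta,w)\mapsto F_{(\Delta,w)}$ is a bijection between the set of balanced $R$-weighted $(d-1)$-complexes on $[n-1]$ and the set of nonzero homogeneous elements of $\operatorname{Cox}(\overline{\mathcal{M}}_{0,n})$ of degree $d$ that are not divisible by any exceptional section $x_I$. Moreover, for every balancing $w$ of a fixed complex $\Delta$, the element $F_{(\Delta,w)}$ is homogeneous of class $D_\Delta$.
   Context: Setup: $[m]=\{1,\dots,m\}$. Fix a Kapranov–Hassett isomorphism $\overline{\mathcal M}_{0,n}\cong\operatorname{Bl}\mathbb P^{n-3}$ over $\operatorname{Spec}R$: the iterated blow-up of $\mathbb P^{n-3}$ at points $q_1,\dots,q_{n-1}$ in general linear position and then along strict transforms of linear spans of subsets of these points, in order of increasing dimension. Then $\operatorname{Pic}(\overline{\mathcal M}_{0,n})=\mathbb ZH\oplus\bigoplus_I\mathbb ZE_I$, the sum over $I\subseteq[n-1]$ with $1\le|I|\le n-4$, where $H$ is the pulled-back hyperplane class and $E_I$ the exceptional divisor over the span of $\{q_i:i\in I\}$; the degree of a class is its $H$-coefficient. Let $P=R[y_1,\dots,y_{n-1},(x_I)_I]$, graded by $\operatorname{Pic}$ via $[x_I]=E_I$, $[y_i]=H-\sum_{I\not\ni i}E_I$, and set $z_i=\prod_{I\ni i}x_I$. Then $\operatorname{Cox}(\overline{\mathcal M}_{0,n})=\bigoplus_D H^0(\overline{\mathcal M}_{0,n},D)$ is identified with the graded subring $R[(x_I^{\pm1})_I,(y_i/z_i-y_j/z_j)_{i,j}]\cap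 P$, where $x_I$ is the section defining $E_I$; the degree of a homogeneous element equals its total degree in the $y_i$. Complexes: a $k$-simplex on $A$ is a multiset of cardinality $k+1$ with entries in $A$; a $k$-complex is a finite set of distinct $k$-simplices; $\operatorname{mult}_a(\sigma)$ is the multiplicity of $a$ in $\sigma$. An $R$-weighted complex assigns a nonzero $w_\sigma\in R$ to each simplex. With $c(\sigma,S)=\prod_a\binom{\operatorname{mult}_a\sigma}{\operatorname{mult}_aS}$, a weighted $k$-complex is balanced in degree $j$ if $\sum_\sigma c(\sigma,S)w_\sigma=0$ for every multiset $S$ of cardinality $j$ with entries in $A$, and balanced if balanced in every degree $j\in\{0,\dots,k\}$ with $j\le k-1$... precisely: in every degree $0\le j\le k-1$. For a balanced weighted $(d-1)$-complex $(\Delta,w)$ on $[n-1]$, let $y_\sigma=\prod_iy_i^{\operatorname{mult}_i\sigma}$, $z_\sigma=\prod_iz_i^{\operatorname{mult}_i\sigma}$, $f=\sum_{\sigma\in\Delta}w_\sigma y_\sigma/z_\sigma$, and $F_{(\Delta,w)}=\big(\prod_I x_I^{a_I}\big)f$ with $a_I=\max_{\sigma\in\Delta}\sum_{i\in I}\operatorname{mult}_i(\sigma)$ (clearing denominators minimally). For any $(d-1)$-complex $\Delta$ on $[n-1]$, $D_\Delta=dH-\sum_I\big(d-\max_{\sigma\in\Delta}\sum_{i\in I}\operatorname{mult}_i(\sigma)\big)E_I$. *)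

theory Defs
  imports Main "HOL-Library.Poly_Mapping" "HOL-Library.Multiset"
begin

datatype var = Y nat | X "nat set"

text \<open>Laurent polynomials over R in the variables: finitely supported maps from
 integer exponent vectors to coefficients. P is the subring of elements whose
 exponents are all nonnegative.\<close>
type_synonym 'a lpoly = "(var \<Rightarrow>\<^sub>0 int) \<Rightarrow>\<^sub>0 'a"

definition validI :: "nat \<Rightarrow> nat set \<Rightarrow> bool" where
  "validI n I \<longleftrightarrow> I \<subseteq> {1..n-1} \<and> 1 \<le> card I \<and> card I \<le> n - 4"

definition validIs :: "nat \<Rightarrow> nat set set" where
  "validIs n = {I. validI n I}"

definition lmono :: "'a::comm_ring_1 \<Rightarrow> (var \<Rightarrow>\<^sub>0 int) \<Rightarrow> 'a lpoly" where
  "lmono c e = Poly_Mapping.single e c"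

definition xvar :: "nat set \<Rightarrow> 'a::comm_ring_1 lpoly" where
  "xvar I = lmono 1 (Poly_Mapping.single (X I) 1)"

definition xinv :: "nat set \<Rightarrow> 'a::comm_ring_1 lpoly" where
  "xinv I = lmono 1 (Poly_Mapping.single (X I) (-1))"

text \<open>exponent vector of z_i = prod over valid I containing i of x_I\<close>
definition zexp :: "nat \<Rightarrow> nat \<Rightarrow> (var \<Rightarrow>\<^sub>0 int)" where
  "zexp n i = (\<Sum>I\<in>{I\<in>validIs n. i \<in> I}. Poly_Mapping.single (X I) 1)"

definition yz :: "nat \<Rightarrow> nat \<Rightarrow> 'a::comm_ring_1 lpoly" where
  "yz n i = lmono 1 (Poly_Mapping.single (Y i) 1 - zexp n i)"

inductive_set cox_alg :: "nat \<Rightarrow> 'a::comm_ring_1 lpoly set" for n where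
  const: "lmono c 0 \<in> cox_alg n"
| xgen: "validI n I \<Longrightarrow> xvar I \<in> cox_alg n"
| xinvgen: "validI n I \<Longrightarrow> xinv I \<in> cox_alg n"
| ygen: "i \<in> {1..n-1} \<Longrightarrow> j \<in> {1..n-1} \<Longrightarrow> yz n i - yz n j \<in> cox_alg n"
| add: "F \<in> cox_alg n \<Longrightarrow> G \<in> cox_alg n \<Longrightarrow> F + G \<in> cox_alg n"
| mult: "F \<in> cox_alg n \<Longrightarrow> G \<in> cox_alg n \<Longrightarrow> F * G \<in> cox_alg n"

definition in_P :: "'a::comm_ring_1 lpoly \<Rightarrow> bool" where
  "in_P F \<longleftrightarrow> (\<forall>m\<in>Poly_Mapping.keys F. \<forall>v. 0 \<le> Poly_Mapping.lookup m v)"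

text \<open>Cox(M_0n) identified with cox_alg n intersected with P\<close>
definition Cox :: "nat \<Rightarrow> 'a::comm_ring_1 lpoly set" where
  "Cox n = {F \<in> cox_alg n. in_P F}"

text \<open>A Picard class  a H + sum_I b_I E_I  is encoded as (a, b) with b_I = 0 for invalid I.\<close>
type_synonym pic = "int \<times> (nat set \<Rightarrow> int)"

text \<open>class of a monomial prod y_i^{b_i} prod x_I^{c_I}, using [x_I] = E_I,
 [y_i] = H - sum_{I not containing i} E_I\<close>
definition pic_class :: "nat \<Rightarrow> (var \<Rightarrow>\<^sub>0 int) \<Rightarrow> pic" where
  "pic_class n m =
     ((\<Sum>i\<in>{1..n-1}. Poly_Mapping.lookup m (Y i)),
      (\<lambda>I. if validI n I then Poly_Mapping.lookup m (X I) - (\<Sum>i\<in>{1..n-1} - I. Poly_Mapping.lookup m (Y i)) else 0))"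

definition homogeneous_of_class :: "nat \<Rightarrow> pic \<Rightarrow> 'a::comm_ring_1 lpoly \<Rightarrow> bool" where
  "homogeneous_of_class n D F \<longleftrightarrow> (\<forall>m\<in>Poly_Mapping.keys F. pic_class n m = D)"

definition homogeneous_deg :: "nat \<Rightarrow> nat \<Rightarrow> 'a::comm_ring_1 lpoly \<Rightarrow> bool" where
  "homogeneous_deg n d F \<longleftrightarrow> (\<exists>D. homogeneous_of_class n D F \<and> fst D = int d)"

definition divisible_by_exceptional :: "nat \<Rightarrow> 'a::comm_ring_1 lpoly \<Rightarrow> bool" where
  "divisible_by_exceptional n F \<longleftrightarrow> (\<exists>I. validI n I \<and> (\<exists>G\<in>Cox n. F = xvar I * G))"

text \<open>An R-weighted (d-1)-complex on [n-1] is encoded by its weight function w: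
 the complex is the (finite, nonempty) support of w, whose elements are
 multisets of cardinality d with entries in [n-1]; weights are nonzero on it.\<close>
definition cplx :: "('a::zero) \<Rightarrow> (nat multiset \<Rightarrow> 'a) \<Rightarrow> nat multiset set" where
  "cplx z w = {\<sigma>. w \<sigma> \<noteq> z}"

abbreviation Cplx :: "(nat multiset \<Rightarrow> 'a::zero) \<Rightarrow> nat multiset set" where
  "Cplx w \<equiv> cplx 0 w"

definition weighted_complex :: "nat \<Rightarrow> nat \<Rightarrow> (nat multiset \<Rightarrow> 'a::comm_ring_1) \<Rightarrow> bool" where
  "weighted_complex n d w \<longleftrightarrow> finite (Cplx w) \<and> Cplx w \<noteq> {} \<and>
     (\<forall>\<sigma>\<in>Cplx w. size \<sigma> = d \<and> set_mset \<sigma> \<subseteq> {1..n-1})"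

definition cmult :: "nat \<Rightarrow> nat multiset \<Rightarrow> nat multiset \<Rightarrow> nat" where
  "cmult n \<sigma> S = (\<Prod>a\<in>{1..n-1}. count \<sigma> a choose count S a)"

definition balanced_in_degree :: "nat \<Rightarrow> (nat multiset \<Rightarrow> 'a::comm_ring_1) \<Rightarrow> nat \<Rightarrow> bool" where
  "balanced_in_degree n w j \<longleftrightarrow>
     (\<forall>S. size S = j \<and> set_mset S \<subseteq> {1..n-1} \<longrightarrow>
        (\<Sum>\<sigma>\<in>Cplx w. of_nat (cmult n \<sigma> S) * w \<sigma>) = 0)"

definition balanced_complex :: "nat \<Rightarrow> nat \<Rightarrow> (nat multiset \<Rightarrow> 'a::comm_ring_1) \<Rightarrow> bool" where
  "balanced_complex n d w \<longleftrightarrow> weighted_complex n d w \<and> (\<forall>j<d. balanced_in_degree n w j)"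

definition aI :: "nat multiset set \<Rightarrow> nat set \<Rightarrow> nat" where
  "aI \<Delta> I = Max ((\<lambda>\<sigma>. \<Sum>i\<in>I. count \<sigma> i) ` \<Delta>)"

definition yzexp :: "nat \<Rightarrow> nat multiset \<Rightarrow> (var \<Rightarrow>\<^sub>0 int)" where
  "yzexp n \<sigma> = (\<Sum>i\<in>{1..n-1}. Poly_Mapping.single (Y i) (int (count \<sigma> i)))
              - (\<Sum>I\<in>validIs n. Poly_Mapping.single (X I) (int (\<Sum>i\<in>I. count \<sigma> i)))"

definition Fcx :: "nat \<Rightarrow> (nat multiset \<Rightarrow> 'a::comm_ring_1) \<Rightarrow> 'a lpoly" where
  "Fcx n w = lmono 1 (\<Sum>I\<in>validIs n. Poly_Mapping.single (X I) (int (aI (Cplx w) I)))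
             * (\<Sum>\<sigma>\<in>Cplx w. lmono (w \<sigma>) (yzexp n \<sigma>))"

definition D_class :: "nat \<Rightarrow> nat \<Rightarrow> nat multiset set \<Rightarrow> pic" where
  "D_class n d \<Delta> = (int d, \<lambda>I. if validI n I then - (int d - int (aI \<Delta> I)) else 0)"

end

theory Submission
  imports Defs "HOL-Library.FuncSet"
begin

text \<open>
  Every element of the algebra generated by the \<open>x\<^sub>I\<^sup>\<plusminus>\<^sup>1\<close> and the differences
  \<open>y\<^sub>i/z\<^sub>i - y\<^sub>j/z\<^sub>j\<close> satisfies a family of linear relations among its coefficients:
  the \<open>x\<^sub>I\<close> only shift exponents, and multiplication by \<open>y\<^sub>i/z\<^sub>i\<close> acts on the
  relations by Pascal's rule in a way that does not depend on \<open>i\<close>, so the differences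
  preserve them. For a homogeneous element of degree \<open>d\<close>, whose monomials are indexed by
  their \<open>y\<close>-multidegrees \<open>\<sigma>\<close>, these relations are exactly the balancing conditions on
  the coefficients \<open>w\<^sub>\<sigma>\<close>. Conversely, balancing means that
  \<open>\<Sum>\<^sub>\<sigma> w\<^sub>\<sigma> \<Prod>\<^sub>i (v\<^sub>i + t)\<^bsup>\<sigma>\<^sub>i\<^esup>\<close> does not depend on \<open>t\<close>; taking
  \<open>v\<^sub>i = y\<^sub>i/z\<^sub>i - y\<^sub>1/z\<^sub>1\<close> and \<open>t = y\<^sub>1/z\<^sub>1\<close> writes \<open>F\<^sub>(\<^sub>\<Delta>\<^sub>,\<^sub>w\<^sub>)\<close> in the
  generators. The exponent of \<open>x\<^sub>I\<close> can be lowered within the Cox ring exactly when it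
  exceeds \<open>a\<^sub>I\<close>, so the minimal choice of the \<open>a\<^sub>I\<close> is non-divisibility by \<open>x\<^sub>I\<close>.
\<close>

abbreviation lk :: "(var \<Rightarrow>\<^sub>0 int) \<Rightarrow> var \<Rightarrow> int" where
  "lk \<equiv> Poly_Mapping.lookup"

abbreviation pts :: "nat \<Rightarrow> nat set" where
  "pts n \<equiv> {1..n-1}"

lemma lmono_mult: "lmono a e * lmono b f = lmono (a * b) (e + f)"
  by (simp add: lmono_def mult_single add.commute)

lemma lmono_add: "lmono a e + lmono b e = lmono (a + b) e"
  by (simp add: lmono_def single_add)

lemma lmono_zero [simp]: "lmono 0 e = 0"
  by (simp add: lmono_def)

lemma lmono_eq_zero_iff [simp]: "lmono c e = 0 \<longleftrightarrow> c = 0"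
  by (metis lmono_def lookup_single_eq single_zero)

lemma lmono_one: "lmono 1 0 = 1"
  by (simp add: lmono_def)

lemma lookup_lmono: "Poly_Mapping.lookup (lmono c e) m = (if m = e then c else 0)"
  by (simp add: lmono_def lookup_single)

lemma keys_lmono: "Poly_Mapping.keys (lmono c e) \<subseteq> {e}"
  by (simp add: lmono_def)

lemma sum_lmono_coeff: "(\<Sum>x\<in>A. lmono (c x) e) = lmono (\<Sum>x\<in>A. c x) e"
  by (induction A rule: infinite_finite_induct) (auto simp: lmono_add)

lemma prod_lmono: "(\<Prod>i\<in>A. lmono (c i) (e i)) = lmono (\<Prod>i\<in>A. c i) (\<Sum>i\<in>A. e i)"
  by (induction A rule: infinite_finite_induct) (auto simp: lmono_one lmono_mult)

lemma power_lmono: "lmono c e ^ k = lmono (c ^ k) (\<Sum>j<k. e)"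
  by (induction k) (auto simp: lmono_one lmono_mult add.commute)

lemma sum_keys_lmono: "(\<Sum>m\<in>Poly_Mapping.keys F. lmono (Poly_Mapping.lookup F m) m) = F"
proof (rule poly_mapping_eqI)
  fix k
  have "Poly_Mapping.lookup (\<Sum>m\<in>Poly_Mapping.keys F. lmono (Poly_Mapping.lookup F m) m) k
      = (\<Sum>m\<in>Poly_Mapping.keys F. if k = m then Poly_Mapping.lookup F m else 0)"
    by (simp add: lookup_sum lookup_lmono)
  also have "\<dots> = Poly_Mapping.lookup F k"
    by (simp add: in_keys_iff)
  finally show "Poly_Mapping.lookup (\<Sum>m\<in>Poly_Mapping.keys F. lmono (Poly_Mapping.lookup F m) m) k
      = Poly_Mapping.lookup F k" .
qed

lemma lmono_mult_eq_sum:
  "lmono c e * F = (\<Sum>m\<in>Poly_Mapping.keys F. lmono (c * Poly_Mapping.lookup F m) (e + m))"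
proof -
  have "lmono c e * F = lmono c e * (\<Sum>m\<in>Poly_Mapping.keys F. lmono (Poly_Mapping.lookup F m) m)"
    by (simp add: sum_keys_lmono)
  then show ?thesis
    by (simp add: sum_distrib_left lmono_mult)
qed

lemma keys_lmono_mult: "Poly_Mapping.keys (lmono c e * F) \<subseteq> (\<lambda>m. e + m) ` Poly_Mapping.keys F"
  using keys_sum[of "\<lambda>m. lmono (c * Poly_Mapping.lookup F m) (e + m)" "Poly_Mapping.keys F"]
    keys_lmono unfolding lmono_mult_eq_sum by fastforce

lemma keys_sum_lmono: "Poly_Mapping.keys (\<Sum>x\<in>A. lmono (c x) (f x)) \<subseteq> f ` A"
  using keys_sum[of "\<lambda>x. lmono (c x) (f x)" A] keys_lmono by fastforce

lemma lookup_sum_lmono: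
  assumes "finite A" "inj_on f (insert x A)"
  shows "Poly_Mapping.lookup (\<Sum>y\<in>A. lmono (c y) (f y)) (f x) = (if x \<in> A then c x else 0)"
proof -
  have "Poly_Mapping.lookup (\<Sum>y\<in>A. lmono (c y) (f y)) (f x) = (\<Sum>y\<in>A. if y = x then c y else 0)"
    unfolding lookup_sum lookup_lmono
    by (rule sum.cong) (use assms(2) in \<open>auto dest: inj_onD\<close>)
  then show ?thesis
    using assms(1) by simp
qed

definition pairing :: "((var \<Rightarrow>\<^sub>0 int) \<Rightarrow> 'a::comm_ring_1) \<Rightarrow> 'a lpoly \<Rightarrow> 'a" where
  "pairing h F = (\<Sum>m\<in>Poly_Mapping.keys F. Poly_Mapping.lookup F m * h m)"

lemma pairing_superset:
  "finite K \<Longrightarrow> Poly_Mapping.keys F \<subseteq> K \<Longrightarrow> pairing h F = (\<Sum>m\<in>K. Poly_Mapping.lookup F m * h m)"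
  unfolding pairing_def by (rule sum.mono_neutral_left) (auto simp: in_keys_iff)

lemma pairing_add: "pairing h (F + G) = pairing h F + pairing h G"
proof -
  let ?K = "Poly_Mapping.keys F \<union> Poly_Mapping.keys G"
  have "pairing h (F + G) = (\<Sum>m\<in>?K. Poly_Mapping.lookup (F + G) m * h m)"
    by (rule pairing_superset) (auto dest: set_mp[OF keys_add])
  moreover have "pairing h F = (\<Sum>m\<in>?K. Poly_Mapping.lookup F m * h m)"
    by (rule pairing_superset) auto
  moreover have "pairing h G = (\<Sum>m\<in>?K. Poly_Mapping.lookup G m * h m)"
    by (rule pairing_superset) auto
  ultimately show ?thesis
    by (simp add: lookup_add distrib_right sum.distrib)
qed

lemma pairing_diff: "pairing h (F - G) = pairing h F - pairing h G"
  using pairing_add[of h F "- G"] by (simp add: pairing_def sum_negf)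

lemma pairing_zero [simp]: "pairing h 0 = 0"
  by (simp add: pairing_def)

lemma pairing_sum: "pairing h (\<Sum>x\<in>A. F x) = (\<Sum>x\<in>A. pairing h (F x))"
  by (induction A rule: infinite_finite_induct) (auto simp: pairing_add)

lemma pairing_lmono: "pairing h (lmono c e) = c * h e"
proof -
  have "pairing h (lmono c e) = (\<Sum>m\<in>{e}. Poly_Mapping.lookup (lmono c e) m * h m)"
    by (rule pairing_superset) (auto simp: keys_lmono)
  then show ?thesis
    by (simp add: lookup_lmono)
qed

lemma pairing_cong:
  "(\<And>m. m \<in> Poly_Mapping.keys F \<Longrightarrow> h m = h' m) \<Longrightarrow> pairing h F = pairing h' F"
  by (simp add: pairing_def)

lemma pairing_fun_add: "pairing (\<lambda>m. h m + h' m) F = pairing h F + pairing h' F"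
  by (simp add: pairing_def distrib_left sum.distrib)

lemma pairing_fun_if: "pairing (\<lambda>m. if P then h m else 0) F = (if P then pairing h F else 0)"
  by (simp add: pairing_def)

lemma pairing_lmono_mult: "pairing h (lmono c e * F) = c * pairing (\<lambda>m. h (e + m)) F"
proof -
  have "pairing h (lmono c e * F)
      = (\<Sum>m\<in>Poly_Mapping.keys F. pairing h (lmono (c * Poly_Mapping.lookup F m) (e + m)))"
    unfolding lmono_mult_eq_sum by (rule pairing_sum)
  then show ?thesis
    by (simp only: pairing_lmono) (simp add: pairing_def sum_distrib_left mult.assoc)
qed

lemma finite_validIs: "finite (validIs n)"
  by (rule finite_subset[of _ "Pow (pts n)"]) (auto simp: validIs_def validI_def)

lemma validI_subset: "validI n I \<Longrightarrow> I \<subseteq> pts n"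
  by (simp add: validI_def)

lemma validI_finite: "validI n I \<Longrightarrow> finite I"
  using finite_subset validI_subset by blast

lemma lookup_sum_single_X:
  "lk (\<Sum>I\<in>validIs n. Poly_Mapping.single (X I) (f I)) v =
     (case v of Y a \<Rightarrow> 0 | X J \<Rightarrow> if validI n J then f J else 0)"
proof (cases v)
  case (X J)
  have "lk (\<Sum>I\<in>validIs n. Poly_Mapping.single (X I) (f I)) v = (\<Sum>I\<in>validIs n. if J = I then f I else 0)"
    using X by (simp add: lookup_sum lookup_single when_def eq_commute[of J])
  also have "\<dots> = (if J \<in> validIs n then f J else 0)"
    using finite_validIs[of n] by (simp add: sum.delta')
  finally show ?thesis
    using X by (simp add: validIs_def)
qed (simp add: lookup_sum lookup_single when_def)

lemma lookup_sum_single_Y: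
  "finite A \<Longrightarrow> lk (\<Sum>i\<in>A. Poly_Mapping.single (Y i) (f i)) v =
     (case v of Y a \<Rightarrow> if a \<in> A then f a else 0 | X J \<Rightarrow> 0)"
  by (cases v) (simp_all add: lookup_sum lookup_single when_def eq_commute)

lemma lookup_zexp_Y [simp]: "lk (zexp n i) (Y a) = 0"
  by (simp add: zexp_def lookup_sum lookup_single when_def)

lemma lookup_zexp_X [simp]: "lk (zexp n i) (X J) = (if validI n J \<and> i \<in> J then 1 else 0)"
proof -
  have "lk (zexp n i) (X J) = (\<Sum>I\<in>{I\<in>validIs n. i \<in> I}. if J = I then 1 else 0)"
    by (simp add: zexp_def lookup_sum lookup_single when_def)
  also have "\<dots> = (if J \<in> {I\<in>validIs n. i \<in> I} then 1 else 0)"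
    using finite_validIs[of n] by (simp add: sum.delta')
  finally show ?thesis
    by (simp add: validIs_def)
qed

definition yz_exp :: "nat \<Rightarrow> nat \<Rightarrow> var \<Rightarrow>\<^sub>0 int" where
  "yz_exp n i = Poly_Mapping.single (Y i) 1 - zexp n i"

lemma yz_eq_lmono: "yz n i = lmono 1 (yz_exp n i)"
  by (simp add: yz_def yz_exp_def)

lemma lookup_yz_exp_Y [simp]: "lk (yz_exp n i) (Y a) = (if i = a then 1 else 0)"
  by (simp add: yz_exp_def lookup_minus lookup_single when_def)

lemma lookup_yz_exp_X [simp]: "lk (yz_exp n i) (X J) = (if validI n J \<and> i \<in> J then -1 else 0)"
  by (simp add: yz_exp_def lookup_minus lookup_single when_def)

section \<open>Linear relations satisfied by the generated algebra\<close>

definition admissible_exp :: "nat \<Rightarrow> (var \<Rightarrow>\<^sub>0 int) \<Rightarrow> bool" where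
  "admissible_exp n m \<longleftrightarrow>
     (\<forall>i. 0 \<le> lk m (Y i) \<and> (i \<notin> pts n \<longrightarrow> lk m (Y i) = 0)) \<and>
     (\<forall>I. \<not> validI n I \<longrightarrow> lk m (X I) = 0)"

definition y_degree :: "nat \<Rightarrow> (var \<Rightarrow>\<^sub>0 int) \<Rightarrow> int" where
  "y_degree n m = (\<Sum>i\<in>pts n. lk m (Y i))"

text \<open>On the monomial \<open>x\<^sup>c y\<^sub>\<sigma>/z\<^sub>\<sigma>\<close> this weight is \<open>c\<close>, whatever \<open>\<sigma>\<close> is.\<close>

definition exc_weight :: "nat \<Rightarrow> (var \<Rightarrow>\<^sub>0 int) \<Rightarrow> nat set \<Rightarrow> int" where
  "exc_weight n m I = (if validI n I then lk m (X I) + (\<Sum>i\<in>I. lk m (Y i)) else 0)"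

text \<open>For an element of degree \<open>d\<close> and \<open>k = d - size S\<close>, the vanishing of
  \<open>pairing (balance_test n c S k)\<close> is the balancing condition in degree \<open>size S\<close>;
  allowing every \<open>k \<ge> 1\<close> makes the family stable under multiplication by \<open>y\<^sub>i/z\<^sub>i\<close>.\<close>

definition balance_test ::
    "nat \<Rightarrow> (nat set \<Rightarrow> int) \<Rightarrow> nat multiset \<Rightarrow> nat \<Rightarrow> (var \<Rightarrow>\<^sub>0 int) \<Rightarrow> 'a::comm_ring_1" where
  "balance_test n c S k m =
     (if exc_weight n m = c \<and> y_degree n m = int (size S) + int k
      then of_nat (\<Prod>a\<in>pts n. nat (lk m (Y a)) choose count S a) else 0)"

definition balanced_lpoly :: "nat \<Rightarrow> 'a::comm_ring_1 lpoly \<Rightarrow> bool" where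
  "balanced_lpoly n F \<longleftrightarrow>
     (\<forall>m\<in>Poly_Mapping.keys F. admissible_exp n m) \<and>
     (\<forall>c S k. 1 \<le> k \<longrightarrow> pairing (balance_test n c S k) F = 0)"

lemma admissible_exp_add: "admissible_exp n e \<Longrightarrow> admissible_exp n m \<Longrightarrow> admissible_exp n (e + m)"
  by (simp add: admissible_exp_def lookup_add)

lemma admissible_exp_keys_lmono_mult:
  assumes "admissible_exp n e" "\<forall>m\<in>Poly_Mapping.keys F. admissible_exp n m"
  shows "\<forall>m\<in>Poly_Mapping.keys (lmono c e * F). admissible_exp n m"
  using keys_lmono_mult[of c e F] assms admissible_exp_add by blast

lemma admissible_yz_exp: "i \<in> pts n \<Longrightarrow> admissible_exp n (yz_exp n i)"
  by (auto simp: admissible_exp_def)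

lemma y_degree_add: "y_degree n (e + m) = y_degree n e + y_degree n m"
  by (simp add: y_degree_def lookup_add sum.distrib)

lemma exc_weight_add: "exc_weight n (e + m) = (\<lambda>I. exc_weight n e I + exc_weight n m I)"
  by (auto simp: exc_weight_def lookup_add sum.distrib)

lemma exc_weight_yz_exp: "exc_weight n (yz_exp n i) = (\<lambda>J. 0)"
proof
  fix J
  show "exc_weight n (yz_exp n i) J = 0"
  proof (cases "validI n J")
    case True
    then have "(\<Sum>a\<in>J. lk (yz_exp n i) (Y a)) = (if i \<in> J then 1 else 0)"
      by (simp add: validI_finite)
    then show ?thesis
      using True by (simp add: exc_weight_def)
  qed (simp add: exc_weight_def)
qed

lemma prod_choose_Suc_at:
  fixes f s :: "nat \<Rightarrow> nat"
  assumes "finite A" "i \<in> A"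
  shows "(\<Prod>a\<in>A. (f a + (if a = i then 1 else 0)) choose s a) =
         (\<Prod>a\<in>A. f a choose s a) +
         (if 0 < s i then (\<Prod>a\<in>A. f a choose (if a = i then s a - 1 else s a)) else 0)"
proof -
  have split: "\<And>g. (\<Prod>a\<in>A. g a) = g i * (\<Prod>a\<in>A - {i}. g a)"
    using assms by (simp add: prod.remove)
  let ?R = "\<Prod>a\<in>A - {i}. f a choose s a"
  have "(\<Prod>a\<in>A - {i}. (f a + (if a = i then 1 else 0)) choose s a) = ?R"
    "(\<Prod>a\<in>A - {i}. f a choose (if a = i then s a - 1 else s a)) = ?R"
    by (auto intro: prod.cong)
  then have "(\<Prod>a\<in>A. (f a + (if a = i then 1 else 0)) choose s a) = ((f i + 1) choose s i) * ?R"
    "(\<Prod>a\<in>A. f a choose (if a = i then s a - 1 else s a)) = (f i choose (s i - 1)) * ?R"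
    "(\<Prod>a\<in>A. f a choose s a) = (f i choose s i) * ?R"
    by (simp_all add: split[of "\<lambda>a. (f a + (if a = i then 1 else 0)) choose s a"]
        split[of "\<lambda>a. f a choose (if a = i then s a - 1 else s a)"] split[of "\<lambda>a. f a choose s a"])
  moreover have "(f i + 1) choose s i = (f i choose s i) + (if 0 < s i then f i choose (s i - 1) else 0)"
    by (cases "s i") simp_all
  ultimately show ?thesis
    by (simp add: distrib_right)
qed

lemma balance_test_shift_x:
  assumes "\<And>i. lk e (Y i) = 0"
  shows "balance_test n c S k (e + m) = balance_test n (\<lambda>J. c J - exc_weight n e J) S k m"
proof -
  have "y_degree n e = 0"
    using assms by (simp add: y_degree_def)
  then have "y_degree n (e + m) = y_degree n m"
    by (simp add: y_degree_add)
  moreover have "exc_weight n (e + m) = c \<longleftrightarrow> exc_weight n m = (\<lambda>J. c J - exc_weight n e J)"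
    by (auto simp: exc_weight_add fun_eq_iff algebra_simps)
  moreover have "\<And>a. lk (e + m) (Y a) = lk m (Y a)"
    using assms by (simp add: lookup_add)
  ultimately show ?thesis
    unfolding balance_test_def by (simp only:)
qed

text \<open>Multiplication by \<open>y\<^sub>i/z\<^sub>i\<close> acts on the tests by Pascal's rule.\<close>

lemma balance_test_shift_y:
  assumes m: "admissible_exp n m" and i: "i \<in> pts n" and k: "1 \<le> k"
  shows "balance_test n c S k (yz_exp n i + m) =
    (balance_test n c S (k - 1) m + (if i \<in># S then balance_test n c (S - {#i#}) k m else 0) :: 'a::comm_ring_1)"
proof -
  have exc: "exc_weight n (yz_exp n i + m) = exc_weight n m"
    by (simp add: exc_weight_add exc_weight_yz_exp)
  have "y_degree n (yz_exp n i) = 1"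
    using i by (simp add: y_degree_def sum.delta)
  then have deg: "y_degree n (yz_exp n i + m) = y_degree n m + 1"
    by (simp add: y_degree_add)
  have Y: "nat (lk (yz_exp n i + m) (Y a)) = nat (lk m (Y a)) + (if a = i then 1 else 0)" for a
    using m by (auto simp: admissible_exp_def lookup_add nat_add_distrib)
  have prod: "(\<Prod>a\<in>pts n. nat (lk (yz_exp n i + m) (Y a)) choose count S a) =
      (\<Prod>a\<in>pts n. nat (lk m (Y a)) choose count S a) +
      (if i \<in># S then (\<Prod>a\<in>pts n. nat (lk m (Y a)) choose count (S - {#i#}) a) else 0)"
    unfolding Y by (subst prod_choose_Suc_at) (use i in \<open>auto intro!: prod.cong\<close>)
  have size: "int (size (S - {#i#})) = int (size S) - 1" if "i \<in># S"
  proof -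
    have "size S = Suc (size (S - {#i#}))"
      using that by (metis insert_DiffM size_add_mset)
    then show ?thesis
      by simp
  qed
  show ?thesis
    using k unfolding balance_test_def exc deg prod
    by (cases "i \<in># S") (auto simp: size of_nat_diff algebra_simps)
qed

lemma balanced_lpoly_one: "balanced_lpoly n (1 :: 'a::comm_ring_1 lpoly)"
proof -
  have "pairing (balance_test n c S k) (lmono (1::'a) 0) = 0" if "1 \<le> k" for c S k
    using that by (simp add: pairing_lmono balance_test_def y_degree_def)
  moreover have "admissible_exp n 0"
    by (simp add: admissible_exp_def)
  ultimately show ?thesis
    using keys_lmono[of "1::'a" 0] unfolding balanced_lpoly_def lmono_one by auto
qed

lemma balanced_lpoly_add:
  "balanced_lpoly n F \<Longrightarrow> balanced_lpoly n G \<Longrightarrow> balanced_lpoly n (F + G)"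
  unfolding balanced_lpoly_def using keys_add[of F G] by (auto simp: pairing_add)

lemma balanced_lpoly_lmono_mult:
  assumes F: "balanced_lpoly n F" and e: "admissible_exp n e" "\<And>i. lk e (Y i) = 0"
  shows "balanced_lpoly n (lmono a e * F)"
  unfolding balanced_lpoly_def
proof (intro conjI allI impI)
  show "\<forall>m\<in>Poly_Mapping.keys (lmono a e * F). admissible_exp n m"
    using F e by (intro admissible_exp_keys_lmono_mult) (auto simp: balanced_lpoly_def)
  fix c S k assume "1 \<le> (k::nat)"
  then show "pairing (balance_test n c S k) (lmono a e * F) = 0"
    using F by (simp add: pairing_lmono_mult balance_test_shift_x[OF e(2)] balanced_lpoly_def)
qed

text \<open>The result does not depend on \<open>i\<close>; this is why the differences
  \<open>y\<^sub>i/z\<^sub>i - y\<^sub>j/z\<^sub>j\<close> preserve the balancing relations.\<close>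

lemma pairing_balance_test_yz_mult:
  assumes F: "balanced_lpoly n F" and i: "i \<in> pts n" and k: "1 \<le> k"
  shows "pairing (balance_test n c S k) (yz n i * F) = pairing (balance_test n c S (k - 1)) F"
proof -
  have adm: "\<And>m. m \<in> Poly_Mapping.keys F \<Longrightarrow> admissible_exp n m"
    and rel: "pairing (balance_test n c (S - {#i#}) k) F = 0"
    using F k by (auto simp: balanced_lpoly_def)
  have "pairing (balance_test n c S k) (yz n i * F) = pairing (\<lambda>m. balance_test n c S k (yz_exp n i + m)) F"
    by (simp add: yz_eq_lmono pairing_lmono_mult)
  also have "\<dots> = pairing (\<lambda>m. balance_test n c S (k - 1) m +
      (if i \<in># S then balance_test n c (S - {#i#}) k m else 0)) F"
    by (rule pairing_cong) (simp add: adm balance_test_shift_y[OF _ i k])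
  finally show ?thesis
    by (simp add: pairing_fun_add pairing_fun_if rel)
qed

lemma balanced_lpoly_yz_diff_mult:
  assumes F: "balanced_lpoly n F" and ij: "i \<in> pts n" "j \<in> pts n"
  shows "balanced_lpoly n ((yz n i - yz n j) * F)"
  unfolding balanced_lpoly_def
proof (intro conjI allI impI)
  have "\<forall>m\<in>Poly_Mapping.keys (yz n t * F). admissible_exp n m" if "t \<in> pts n" for t
    unfolding yz_eq_lmono using F that
    by (intro admissible_exp_keys_lmono_mult admissible_yz_exp) (auto simp: balanced_lpoly_def)
  then show "\<forall>m\<in>Poly_Mapping.keys ((yz n i - yz n j) * F). admissible_exp n m"
    using keys_diff[of "yz n i * F" "yz n j * F"] ij by (auto simp: left_diff_distrib)
  fix c S k assume "1 \<le> (k::nat)"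
  then show "pairing (balance_test n c S k) ((yz n i - yz n j) * F) = 0"
    using F ij by (simp add: left_diff_distrib pairing_diff pairing_balance_test_yz_mult)
qed

text \<open>Stated for products \<open>F * G\<close> so that the case \<open>mult\<close> of the induction
  reduces to the generators.\<close>

lemma balanced_lpoly_cox_alg_mult:
  "F \<in> cox_alg n \<Longrightarrow> balanced_lpoly n G \<Longrightarrow> balanced_lpoly n (F * G)"
proof (induction F arbitrary: G rule: cox_alg.induct)
  case (const c)
  then show ?case
    by (intro balanced_lpoly_lmono_mult) (auto simp: admissible_exp_def)
next
  case (xgen I)
  then show ?case
    unfolding xvar_def
    by (intro balanced_lpoly_lmono_mult) (auto simp: admissible_exp_def lookup_single when_def)
next
  case (xinvgen I)
  then show ?case
    unfolding xinv_def
    by (intro balanced_lpoly_lmono_mult) (auto simp: admissible_exp_def lookup_single when_def)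
next
  case (ygen i j)
  then show ?case
    by (simp add: balanced_lpoly_yz_diff_mult)
next
  case (add F F')
  then show ?case
    by (simp add: distrib_right balanced_lpoly_add)
next
  case (mult F F')
  then show ?case
    by (simp add: mult.assoc)
qed

lemma balanced_lpoly_cox_alg: "F \<in> cox_alg n \<Longrightarrow> balanced_lpoly n F"
  using balanced_lpoly_cox_alg_mult[where G = 1] balanced_lpoly_one by fastforce

section \<open>Balanced complexes and translation invariance\<close>

lemma size_eq_sum_count: "set_mset \<sigma> \<subseteq> A \<Longrightarrow> finite A \<Longrightarrow> size \<sigma> = (\<Sum>a\<in>A. count \<sigma> a)"
  by (simp add: size_multiset_overloaded_eq not_in_iff
      sum.mono_neutral_left[of A "set_mset \<sigma>" "count \<sigma>"])

lemma weighted_complex_finite: "weighted_complex n d w \<Longrightarrow> finite (Cplx w)"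
  by (simp add: weighted_complex_def)

lemma weighted_complex_set: "weighted_complex n d w \<Longrightarrow> \<sigma> \<in> Cplx w \<Longrightarrow> set_mset \<sigma> \<subseteq> pts n"
  by (simp add: weighted_complex_def)

lemma weighted_complex_size: "weighted_complex n d w \<Longrightarrow> \<sigma> \<in> Cplx w \<Longrightarrow> size \<sigma> = d"
  by (simp add: weighted_complex_def)

lemma weighted_complex_sum_count:
  "weighted_complex n d w \<Longrightarrow> \<sigma> \<in> Cplx w \<Longrightarrow> (\<Sum>a\<in>pts n. count \<sigma> a) = d"
  by (metis finite_atLeastAtMost size_eq_sum_count weighted_complex_set weighted_complex_size)

definition mset_of :: "nat \<Rightarrow> (nat \<Rightarrow> nat) \<Rightarrow> nat multiset" where
  "mset_of n p = (\<Sum>i\<in>pts n. replicate_mset (p i) i)"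

lemma count_mset_of: "count (mset_of n p) a = (if a \<in> pts n then p a else 0)"
  by (simp add: mset_of_def count_sum sum.delta')

lemma size_mset_of: "size (mset_of n p) = (\<Sum>i\<in>pts n. p i)"
  by (simp add: mset_of_def)

lemma set_mset_of: "set_mset (mset_of n p) \<subseteq> pts n"
  by (auto simp: count_mset_of simp flip: count_greater_zero_iff split: if_splits)

lemma cmult_mset_of: "cmult n \<sigma> (mset_of n p) = (\<Prod>a\<in>pts n. count \<sigma> a choose p a)"
  unfolding cmult_def by (rule prod.cong) (auto simp: count_mset_of)

lemma prod_choose_eq_0: "\<exists>a\<in>A. q a < p a \<Longrightarrow> finite A \<Longrightarrow> (\<Prod>a\<in>A. q a choose p a) = 0"
  by (auto intro: prod_zero simp: binomial_eq_0)

lemma prod_power_add_expand: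
  fixes v :: "nat \<Rightarrow> 'b::comm_ring_1"
  assumes "finite A" and le: "\<And>i. count \<sigma> i \<le> d" and sum: "(\<Sum>i\<in>A. count \<sigma> i) = d"
  shows "(\<Prod>i\<in>A. (v i + t) ^ count \<sigma> i) =
    (\<Sum>p\<in>PiE A (\<lambda>_. {..d}). of_nat (\<Prod>a\<in>A. count \<sigma> a choose p a) *
       (\<Prod>i\<in>A. v i ^ p i) * t ^ (d - (\<Sum>i\<in>A. p i)))"
proof -
  have binom: "(v i + t) ^ count \<sigma> i =
      (\<Sum>k\<in>{..d}. of_nat (count \<sigma> i choose k) * v i ^ k * t ^ (count \<sigma> i - k))" for i
    unfolding binomial_ring
    by (rule sum.mono_neutral_left) (use le[of i] in \<open>auto simp: binomial_eq_0\<close>)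
  have expand_term: "(\<Prod>i\<in>A. of_nat (count \<sigma> i choose p i) * v i ^ p i * t ^ (count \<sigma> i - p i)) =
      of_nat (\<Prod>a\<in>A. count \<sigma> a choose p a) * (\<Prod>i\<in>A. v i ^ p i) * t ^ (d - (\<Sum>i\<in>A. p i))" for p
  proof (cases "\<forall>i\<in>A. p i \<le> count \<sigma> i")
    case True
    have "(\<Sum>i\<in>A. count \<sigma> i - p i) = d - (\<Sum>i\<in>A. p i)"
      using True sum sum_subtractf_nat[of A p "count \<sigma>"] by simp
    then have "(\<Prod>i\<in>A. t ^ (count \<sigma> i - p i)) = t ^ (d - (\<Sum>i\<in>A. p i))"
      by (metis power_sum)
    then show ?thesis
      by (simp add: prod.distrib of_nat_prod)
  next
    case False
    then have "(\<Prod>a\<in>A. count \<sigma> a choose p a) = 0"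
      using assms(1) by (simp add: prod_choose_eq_0 not_le)
    then show ?thesis
      by (simp add: prod.distrib flip: of_nat_prod)
  qed
  have "(\<Prod>i\<in>A. (v i + t) ^ count \<sigma> i) =
      (\<Prod>i\<in>A. \<Sum>k\<in>{..d}. of_nat (count \<sigma> i choose k) * v i ^ k * t ^ (count \<sigma> i - k))"
    by (simp only: binom)
  also have "\<dots> = (\<Sum>p\<in>PiE A (\<lambda>_. {..d}).
      \<Prod>i\<in>A. of_nat (count \<sigma> i choose p i) * v i ^ p i * t ^ (count \<sigma> i - p i))"
    by (rule prod_sum_PiE) (simp_all add: assms(1))
  finally show ?thesis
    by (simp only: expand_term)
qed

text \<open>Below degree \<open>d\<close> this is a balancing sum; in degree \<open>\<ge> d\<close> only \<open>\<sigma> = mset_of n p\<close>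
  contributes.\<close>

lemma balanced_cmult_mset_of:
  assumes bc: "balanced_complex n d w"
  shows "(\<Sum>\<sigma>\<in>Cplx w. of_nat (cmult n \<sigma> (mset_of n p)) * w \<sigma>) =
         (if (\<Sum>i\<in>pts n. p i) = d then w (mset_of n p) else 0)"
proof (cases "(\<Sum>i\<in>pts n. p i) < d")
  case True
  then have "balanced_in_degree n w (\<Sum>i\<in>pts n. p i)"
    using bc by (simp add: balanced_complex_def)
  then show ?thesis
    using True set_mset_of[of n p] by (simp add: balanced_in_degree_def size_mset_of)
next
  case False
  have wc: "weighted_complex n d w"
    using bc by (simp add: balanced_complex_def)
  have cmult: "cmult n \<sigma> (mset_of n p) = (if \<sigma> = mset_of n p then 1 else 0)" if \<sigma>: "\<sigma> \<in> Cplx w" for \<sigma>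
  proof (cases "\<forall>a\<in>pts n. p a \<le> count \<sigma> a")
    case True
    have "\<forall>a\<in>pts n. p a = count \<sigma> a"
    proof (rule ccontr)
      assume "\<not> (\<forall>a\<in>pts n. p a = count \<sigma> a)"
      then have "(\<Sum>i\<in>pts n. p i) < (\<Sum>a\<in>pts n. count \<sigma> a)"
        using True by (intro sum_strict_mono_ex1) force+
      then show False
        using False weighted_complex_sum_count[OF wc \<sigma>] by simp
    qed
    moreover have "a \<notin># \<sigma>" if "a \<notin> pts n" for a
      using weighted_complex_set[OF wc \<sigma>] that by blast
    ultimately have "\<sigma> = mset_of n p"
      by (intro multiset_eqI) (simp add: count_mset_of not_in_iff)
    then show ?thesis
      by (simp add: cmult_def)
  next
    case False
    then obtain a where "a \<in> pts n" "count \<sigma> a < p a"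
      by (auto simp: not_le)
    moreover from this have "\<sigma> \<noteq> mset_of n p"
      by (auto simp: count_mset_of)
    ultimately show ?thesis
      by (auto simp: cmult_mset_of intro!: prod_choose_eq_0)
  qed
  have "(\<Sum>\<sigma>\<in>Cplx w. of_nat (cmult n \<sigma> (mset_of n p)) * w \<sigma>) =
      (\<Sum>\<sigma>\<in>Cplx w. if \<sigma> = mset_of n p then w \<sigma> else 0)"
    by (rule sum.cong) (simp_all add: cmult)
  also have "\<dots> = (if mset_of n p \<in> Cplx w then w (mset_of n p) else 0)"
    using weighted_complex_finite[OF wc] by simp
  also have "\<dots> = (if (\<Sum>i\<in>pts n. p i) = d then w (mset_of n p) else 0)"
    using weighted_complex_size[OF wc, of "mset_of n p"] by (auto simp: size_mset_of cplx_def)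
  finally show ?thesis .
qed

lemma balanced_sum_prod_power_add:
  fixes w :: "nat multiset \<Rightarrow> 'a::comm_ring_1"
  assumes bc: "balanced_complex n d w"
  shows "(\<Sum>\<sigma>\<in>Cplx w. w \<sigma> * (\<Prod>i\<in>pts n. (v i + t) ^ count \<sigma> i)) =
    (\<Sum>p\<in>PiE (pts n) (\<lambda>_. {..d}).
       (if (\<Sum>i\<in>pts n. p i) = d then w (mset_of n p) else 0) * (\<Prod>i\<in>pts n. v i ^ p i))"
proof -
  have wc: "weighted_complex n d w"
    using bc by (simp add: balanced_complex_def)
  let ?P = "PiE (pts n) (\<lambda>_. {..d})"
  let ?V = "\<lambda>p. \<Prod>i\<in>pts n. v i ^ p i" and ?T = "\<lambda>p. t ^ (d - (\<Sum>i\<in>pts n. p i))"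
  have "(\<Sum>\<sigma>\<in>Cplx w. w \<sigma> * (\<Prod>i\<in>pts n. (v i + t) ^ count \<sigma> i)) =
      (\<Sum>\<sigma>\<in>Cplx w. w \<sigma> * (\<Sum>p\<in>?P. of_nat (cmult n \<sigma> (mset_of n p)) * ?V p * ?T p))"
  proof (rule sum.cong[OF refl])
    fix \<sigma> assume \<sigma>: "\<sigma> \<in> Cplx w"
    have "count \<sigma> i \<le> d" for i
      using count_le_size[of \<sigma> i] weighted_complex_size[OF wc \<sigma>] by simp
    note expand = prod_power_add_expand[OF _ this weighted_complex_sum_count[OF wc \<sigma>]]
    show "w \<sigma> * (\<Prod>i\<in>pts n. (v i + t) ^ count \<sigma> i) =
        w \<sigma> * (\<Sum>p\<in>?P. of_nat (cmult n \<sigma> (mset_of n p)) * ?V p * ?T p)"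
      by (simp only: expand finite_atLeastAtMost cmult_mset_of)
  qed
  also have "\<dots> = (\<Sum>p\<in>?P. (\<Sum>\<sigma>\<in>Cplx w. of_nat (cmult n \<sigma> (mset_of n p)) * w \<sigma>) * (?V p * ?T p))"
    by (simp add: sum_distrib_left sum_distrib_right mult_ac sum.swap[of _ "Cplx w"])
  also have "\<dots> = (\<Sum>p\<in>?P. (if (\<Sum>i\<in>pts n. p i) = d then w (mset_of n p) else 0) * (?V p * ?T p))"
    by (simp only: balanced_cmult_mset_of[OF bc])
  also have "\<dots> = (\<Sum>p\<in>?P. (if (\<Sum>i\<in>pts n. p i) = d then w (mset_of n p) else 0) * ?V p)"
    by (rule sum.cong) simp_all
  finally show ?thesis .
qed

lemma balanced_translation_invariant:
  fixes w :: "nat multiset \<Rightarrow> 'a::comm_ring_1"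
  assumes "balanced_complex n d w"
  shows "(\<Sum>\<sigma>\<in>Cplx w. w \<sigma> * (\<Prod>i\<in>pts n. (v i + t) ^ count \<sigma> i)) =
         (\<Sum>\<sigma>\<in>Cplx w. w \<sigma> * (\<Prod>i\<in>pts n. v i ^ count \<sigma> i))"
  using balanced_sum_prod_power_add[OF assms, of v t] balanced_sum_prod_power_add[OF assms, of v 0]
  by simp

lemma Cplx_lmono: "Cplx (\<lambda>\<sigma>. lmono (w \<sigma>) 0) = Cplx w"
  by (simp add: cplx_def)

lemma balanced_complex_lmono:
  assumes "balanced_complex n d w"
  shows "balanced_complex n d (\<lambda>\<sigma>. lmono (w \<sigma>) 0)"
proof -
  have "of_nat k * lmono c 0 = lmono (of_nat k * c) 0" for k and c :: 'a
    by (induction k) (simp_all add: distrib_right lmono_add)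
  then have "(\<Sum>\<sigma>\<in>Cplx w. of_nat (cmult n \<sigma> S) * lmono (w \<sigma>) 0) =
      lmono (\<Sum>\<sigma>\<in>Cplx w. of_nat (cmult n \<sigma> S) * w \<sigma>) 0" for S
    by (simp add: sum_lmono_coeff)
  then show ?thesis
    using assms by (simp add: balanced_complex_def balanced_in_degree_def weighted_complex_def Cplx_lmono)
qed

definition xyz_exp :: "nat \<Rightarrow> (nat set \<Rightarrow> int) \<Rightarrow> nat multiset \<Rightarrow> var \<Rightarrow>\<^sub>0 int" where
  "xyz_exp n c \<sigma> = (\<Sum>I\<in>validIs n. Poly_Mapping.single (X I) (c I)) + yzexp n \<sigma>"

definition y_mset :: "nat \<Rightarrow> (var \<Rightarrow>\<^sub>0 int) \<Rightarrow> nat multiset" where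
  "y_mset n m = mset_of n (\<lambda>i. nat (lk m (Y i)))"

lemma lookup_yzexp_Y [simp]: "lk (yzexp n \<sigma>) (Y a) = (if a \<in> pts n then int (count \<sigma> a) else 0)"
  by (simp add: yzexp_def lookup_minus lookup_sum_single_X lookup_sum_single_Y)

lemma lookup_yzexp_X [simp]:
  "lk (yzexp n \<sigma>) (X J) = (if validI n J then - int (\<Sum>i\<in>J. count \<sigma> i) else 0)"
  by (simp add: yzexp_def lookup_minus lookup_sum_single_X lookup_sum_single_Y)

lemma lookup_xyz_exp_Y [simp]: "lk (xyz_exp n c \<sigma>) (Y a) = (if a \<in> pts n then int (count \<sigma> a) else 0)"
  by (simp add: xyz_exp_def lookup_add lookup_sum_single_X)

lemma lookup_xyz_exp_X [simp]:
  "lk (xyz_exp n c \<sigma>) (X J) = (if validI n J then c J - int (\<Sum>i\<in>J. count \<sigma> i) else 0)"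
  by (simp add: xyz_exp_def lookup_add lookup_sum_single_X)

lemma count_y_mset: "count (y_mset n m) a = (if a \<in> pts n then nat (lk m (Y a)) else 0)"
  by (simp add: y_mset_def count_mset_of)

lemma set_y_mset: "set_mset (y_mset n m) \<subseteq> pts n"
  unfolding y_mset_def by (rule set_mset_of)

lemma y_mset_xyz_exp: "set_mset \<sigma> \<subseteq> pts n \<Longrightarrow> y_mset n (xyz_exp n c \<sigma>) = \<sigma>"
  by (rule multiset_eqI) (auto simp: count_y_mset not_in_iff)

lemma inj_on_xyz_exp: "inj_on (xyz_exp n c) {\<sigma>. set_mset \<sigma> \<subseteq> pts n}"
  by (rule inj_on_inverseI[where g = "y_mset n"]) (simp add: y_mset_xyz_exp)

lemma Fcx_eq_sum: "Fcx n w = (\<Sum>\<sigma>\<in>Cplx w. lmono (w \<sigma>) (xyz_exp n (\<lambda>I. int (aI (Cplx w) I)) \<sigma>))"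
  by (simp add: Fcx_def xyz_exp_def sum_distrib_left lmono_mult)

lemma lookup_Fcx:
  assumes wc: "weighted_complex n d w" and \<sigma>: "set_mset \<sigma> \<subseteq> pts n"
  shows "Poly_Mapping.lookup (Fcx n w) (xyz_exp n (\<lambda>I. int (aI (Cplx w) I)) \<sigma>) = w \<sigma>"
proof -
  have "inj_on (xyz_exp n (\<lambda>I. int (aI (Cplx w) I))) (insert \<sigma> (Cplx w))"
    by (rule inj_on_subset[OF inj_on_xyz_exp]) (use \<sigma> weighted_complex_set[OF wc] in blast)
  then show ?thesis
    unfolding Fcx_eq_sum using weighted_complex_finite[OF wc]
    by (simp add: lookup_sum_lmono cplx_def)
qed

lemma keys_Fcx:
  assumes wc: "weighted_complex n d w"
  shows "Poly_Mapping.keys (Fcx n w) = xyz_exp n (\<lambda>I. int (aI (Cplx w) I)) ` Cplx w"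
proof
  show "Poly_Mapping.keys (Fcx n w) \<subseteq> xyz_exp n (\<lambda>I. int (aI (Cplx w) I)) ` Cplx w"
    unfolding Fcx_eq_sum by (rule keys_sum_lmono)
  show "xyz_exp n (\<lambda>I. int (aI (Cplx w) I)) ` Cplx w \<subseteq> Poly_Mapping.keys (Fcx n w)"
    using lookup_Fcx[OF wc] weighted_complex_set[OF wc] by (force simp: in_keys_iff cplx_def)
qed

lemma y_mset_keys_Fcx:
  assumes wc: "weighted_complex n d w"
  shows "y_mset n ` Poly_Mapping.keys (Fcx n w) = Cplx w"
proof -
  have "y_mset n ` Poly_Mapping.keys (Fcx n w) =
      (\<lambda>\<sigma>. y_mset n (xyz_exp n (\<lambda>I. int (aI (Cplx w) I)) \<sigma>)) ` Cplx w"
    by (simp add: keys_Fcx[OF wc] image_image)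
  also have "\<dots> = Cplx w"
    using weighted_complex_set[OF wc] by (simp add: y_mset_xyz_exp)
  finally show ?thesis .
qed

lemma sum_count_le_aI: "finite \<Delta> \<Longrightarrow> \<sigma> \<in> \<Delta> \<Longrightarrow> (\<Sum>i\<in>I. count \<sigma> i) \<le> aI \<Delta> I"
  unfolding aI_def by (rule Max_ge) auto

lemma aI_attained: "finite \<Delta> \<Longrightarrow> \<Delta> \<noteq> {} \<Longrightarrow> \<exists>\<sigma>\<in>\<Delta>. (\<Sum>i\<in>I. count \<sigma> i) = aI \<Delta> I"
  unfolding aI_def by (metis (no_types, lifting) Max_in finite_imageI image_iff image_is_empty)

lemma pic_class_eq:
  "pic_class n m = (y_degree n m, \<lambda>I. if validI n I then exc_weight n m I - y_degree n m else 0)"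
proof -
  have "(\<Sum>i\<in>pts n. lk m (Y i)) = (\<Sum>i\<in>I. lk m (Y i)) + (\<Sum>i\<in>pts n - I. lk m (Y i))"
    if "validI n I" for I
    using validI_subset[OF that] by (metis finite_atLeastAtMost sum.subset_diff add.commute)
  then show ?thesis
    by (auto simp: pic_class_def y_degree_def exc_weight_def fun_eq_iff)
qed

lemma y_degree_xyz_exp: "set_mset \<sigma> \<subseteq> pts n \<Longrightarrow> y_degree n (xyz_exp n c \<sigma>) = int (size \<sigma>)"
  by (simp add: y_degree_def size_eq_sum_count flip: of_nat_sum)

lemma exc_weight_xyz_exp: "exc_weight n (xyz_exp n c \<sigma>) I = (if validI n I then c I else 0)"
proof -
  have "(\<Sum>i\<in>I. lk (xyz_exp n c \<sigma>) (Y i)) = int (\<Sum>i\<in>I. count \<sigma> i)" if "validI n I"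
    using validI_subset[OF that] by (auto simp: of_nat_sum intro!: sum.cong)
  then show ?thesis
    by (simp add: exc_weight_def)
qed

lemma Fcx_homogeneous:
  assumes wc: "weighted_complex n d w"
  shows "homogeneous_of_class n (D_class n d (Cplx w)) (Fcx n w)"
  unfolding homogeneous_of_class_def keys_Fcx[OF wc]
  using weighted_complex_set[OF wc] weighted_complex_size[OF wc]
  by (auto simp: pic_class_eq y_degree_xyz_exp exc_weight_xyz_exp D_class_def)

lemma Fcx_homogeneous_deg: "weighted_complex n d w \<Longrightarrow> homogeneous_deg n d (Fcx n w)"
  unfolding homogeneous_deg_def using Fcx_homogeneous by (metis D_class_def fst_conv)

lemma homogeneous_deg_weights:
  assumes "homogeneous_deg n d F"
  obtains c where "\<And>m. m \<in> Poly_Mapping.keys F \<Longrightarrow> y_degree n m = int d \<and> exc_weight n m = c"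
proof -
  obtain D where D: "homogeneous_of_class n D F" "fst D = int d"
    using assms unfolding homogeneous_deg_def by blast
  let ?c = "\<lambda>I. if validI n I then snd D I + int d else 0"
  have "y_degree n m = int d \<and> exc_weight n m = ?c" if "m \<in> Poly_Mapping.keys F" for m
  proof -
    have "pic_class n m = D"
      using D(1) that unfolding homogeneous_of_class_def by blast
    then show ?thesis
      using D(2) by (auto simp: pic_class_eq fun_eq_iff exc_weight_def split: if_splits)
  qed
  then show ?thesis
    using that by blast
qed

section \<open>\<open>F\<^sub>(\<^sub>\<Delta>\<^sub>,\<^sub>w\<^sub>)\<close> lies in the Cox ring\<close>

lemma cox_alg_one: "1 \<in> cox_alg n"
  using cox_alg.const[of 1 n] by (simp add: lmono_one)

lemma cox_alg_sum: "(\<And>x. x \<in> A \<Longrightarrow> f x \<in> cox_alg n) \<Longrightarrow> sum f A \<in> cox_alg n"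
  using cox_alg.const[of 0 n] by (induction A rule: infinite_finite_induct) (auto intro: cox_alg.add)

lemma cox_alg_prod: "(\<And>x. x \<in> A \<Longrightarrow> f x \<in> cox_alg n) \<Longrightarrow> prod f A \<in> cox_alg n"
  by (induction A rule: infinite_finite_induct) (auto simp: cox_alg_one intro: cox_alg.mult)

lemma cox_alg_power: "F \<in> cox_alg n \<Longrightarrow> F ^ k \<in> cox_alg n"
  by (induction k) (auto simp: cox_alg_one intro: cox_alg.mult)

lemma xvar_power: "xvar I ^ k = (lmono 1 (Poly_Mapping.single (X I) (int k)) :: 'a::comm_ring_1 lpoly)"
proof -
  have "(\<Sum>j<k. Poly_Mapping.single (X I) (1::int)) = Poly_Mapping.single (X I) (int k)"
    by (induction k) (auto simp: single_add add.commute)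
  then show ?thesis
    by (simp add: xvar_def power_lmono)
qed

lemma lmono_x_in_cox_alg:
  "(lmono 1 (\<Sum>I\<in>validIs n. Poly_Mapping.single (X I) (int (a I))) :: 'a::comm_ring_1 lpoly) \<in> cox_alg n"
proof -
  have "(lmono 1 (\<Sum>I\<in>validIs n. Poly_Mapping.single (X I) (int (a I))) :: 'a lpoly) =
      (\<Prod>I\<in>validIs n. xvar I ^ a I)"
    by (simp add: xvar_power prod_lmono)
  also have "\<dots> \<in> cox_alg n"
    by (intro cox_alg_prod cox_alg_power cox_alg.xgen) (simp add: validIs_def)
  finally show ?thesis .
qed

lemma yzexp_eq_sum_yz_exp: "yzexp n \<sigma> = (\<Sum>i\<in>pts n. \<Sum>j<count \<sigma> i. yz_exp n i)"
proof (rule poly_mapping_eqI)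
  fix v
  show "lk (yzexp n \<sigma>) v = lk (\<Sum>i\<in>pts n. \<Sum>j<count \<sigma> i. yz_exp n i) v"
  proof (cases v)
    case (Y a)
    have "lk (\<Sum>i\<in>pts n. \<Sum>j<count \<sigma> i. yz_exp n i) v = (\<Sum>i\<in>pts n. if i = a then int (count \<sigma> i) else 0)"
      by (rule trans[OF lookup_sum], rule sum.cong) (auto simp: Y lookup_sum)
    then show ?thesis
      by (simp add: Y sum.delta)
  next
    case (X J)
    have "lk (\<Sum>i\<in>pts n. \<Sum>j<count \<sigma> i. yz_exp n i) v =
        (\<Sum>i\<in>pts n. if validI n J \<and> i \<in> J then - int (count \<sigma> i) else 0)"
      by (rule trans[OF lookup_sum], rule sum.cong) (auto simp: X lookup_sum)
    also have "\<dots> = (if validI n J then - int (\<Sum>i\<in>J. count \<sigma> i) else 0)"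
      using validI_subset[of n J] by (simp add: sum.inter_restrict[symmetric] Int_absorb1 sum_negf)
    finally show ?thesis
      by (simp add: X)
  qed
qed

lemma lmono_yzexp: "lmono c (yzexp n \<sigma>) = lmono c 0 * (\<Prod>i\<in>pts n. yz n i ^ count \<sigma> i)"
  by (simp add: yz_eq_lmono power_lmono prod_lmono lmono_mult yzexp_eq_sum_yz_exp)

lemma Fcx_in_cox_alg:
  assumes bc: "balanced_complex n d w" and n: "2 \<le> n"
  shows "Fcx n w \<in> cox_alg n"
proof -
  let ?u = "\<lambda>i. yz n i :: 'a lpoly"
  have "(\<Sum>\<sigma>\<in>Cplx w. lmono (w \<sigma>) (yzexp n \<sigma>)) =
      (\<Sum>\<sigma>\<in>Cplx w. lmono (w \<sigma>) 0 * (\<Prod>i\<in>pts n. ((?u i - ?u 1) + ?u 1) ^ count \<sigma> i))"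
    by (simp add: lmono_yzexp)
  also have "\<dots> = (\<Sum>\<sigma>\<in>Cplx w. lmono (w \<sigma>) 0 * (\<Prod>i\<in>pts n. (?u i - ?u 1) ^ count \<sigma> i))"
    using balanced_translation_invariant[OF balanced_complex_lmono[OF bc], of "\<lambda>i. ?u i - ?u 1" "?u 1"]
    unfolding Cplx_lmono by simp
  also have "\<dots> \<in> cox_alg n"
    using n by (intro cox_alg_sum cox_alg.mult cox_alg.const cox_alg_prod cox_alg_power cox_alg.ygen) auto
  finally show ?thesis
    unfolding Fcx_def by (rule cox_alg.mult[OF lmono_x_in_cox_alg])
qed

lemma Fcx_in_P:
  assumes wc: "weighted_complex n d w"
  shows "in_P (Fcx n w)"
  unfolding in_P_def keys_Fcx[OF wc]
proof (intro ballI allI)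
  fix m v assume "m \<in> xyz_exp n (\<lambda>I. int (aI (Cplx w) I)) ` Cplx w"
  then obtain \<sigma> where \<sigma>: "\<sigma> \<in> Cplx w" and m: "m = xyz_exp n (\<lambda>I. int (aI (Cplx w) I)) \<sigma>"
    by blast
  show "0 \<le> lk m v"
  proof (cases v)
    case (X J)
    have "(\<Sum>i\<in>J. count \<sigma> i) \<le> aI (Cplx w) J"
      by (rule sum_count_le_aI[OF weighted_complex_finite[OF wc] \<sigma>])
    then show ?thesis
      by (simp add: X m flip: of_nat_sum)
  qed (simp add: m)
qed

lemma Fcx_in_Cox: "balanced_complex n d w \<Longrightarrow> 2 \<le> n \<Longrightarrow> Fcx n w \<in> Cox n"
  using Fcx_in_cox_alg Fcx_in_P[of n d w] by (simp add: Cox_def balanced_complex_def)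

lemma Fcx_nonzero:
  assumes wc: "weighted_complex n d w"
  shows "Fcx n w \<noteq> 0"
proof
  assume "Fcx n w = 0"
  then have "Poly_Mapping.keys (Fcx n w) = {}"
    by simp
  then show False
    using keys_Fcx[OF wc] wc by (simp add: weighted_complex_def)
qed

lemma divisible_by_exceptionalD:
  assumes "divisible_by_exceptional n F"
  obtains I where "validI n I" "\<And>m. m \<in> Poly_Mapping.keys F \<Longrightarrow> 1 \<le> lk m (X I)"
proof -
  obtain I G where I: "validI n I" and G: "G \<in> Cox n" and F: "F = xvar I * G"
    using assms unfolding divisible_by_exceptional_def by blast
  have "1 \<le> lk m (X I)" if "m \<in> Poly_Mapping.keys F" for m
  proof -
    obtain m' where "m' \<in> Poly_Mapping.keys G" "m = Poly_Mapping.single (X I) 1 + m'"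
      using \<open>m \<in> Poly_Mapping.keys F\<close> keys_lmono_mult unfolding F xvar_def by blast
    with G show ?thesis
      by (simp add: Cox_def in_P_def lookup_add)
  qed
  with I that show ?thesis
    by blast
qed

lemma divisible_by_exceptionalI:
  assumes F: "F \<in> Cox n" and I: "validI n I" and ge: "\<And>m. m \<in> Poly_Mapping.keys F \<Longrightarrow> 1 \<le> lk m (X I)"
  shows "divisible_by_exceptional n F"
proof -
  let ?G = "xinv I * F"
  have "xvar I * xinv I = (1 :: 'a lpoly)"
    by (simp add: xvar_def xinv_def lmono_mult lmono_one flip: single_add)
  then have "F = xvar I * ?G"
    by (simp add: mult.assoc[symmetric])
  moreover have "in_P ?G"
    unfolding in_P_def
  proof (intro ballI allI)
    fix m' u assume "m' \<in> Poly_Mapping.keys ?G"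
    then obtain m where m: "m \<in> Poly_Mapping.keys F" and m': "m' = Poly_Mapping.single (X I) (-1) + m"
      using keys_lmono_mult unfolding xinv_def by blast
    show "0 \<le> lk m' u"
      using F ge[OF m] m by (auto simp: m' lookup_add lookup_single when_def Cox_def in_P_def)
  qed
  moreover have "?G \<in> cox_alg n"
    using F I by (simp add: Cox_def cox_alg.mult cox_alg.xinvgen)
  ultimately show ?thesis
    unfolding divisible_by_exceptional_def Cox_def using I by blast
qed

lemma Fcx_not_divisible:
  assumes wc: "weighted_complex n d w"
  shows "\<not> divisible_by_exceptional n (Fcx n w)"
proof
  let ?m = "xyz_exp n (\<lambda>I. int (aI (Cplx w) I))"
  assume "divisible_by_exceptional n (Fcx n w)"
  then obtain I where I: "validI n I" and ge: "\<And>m. m \<in> Poly_Mapping.keys (Fcx n w) \<Longrightarrow> 1 \<le> lk m (X I)"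
    using divisible_by_exceptionalD by metis
  have "Cplx w \<noteq> {}"
    using wc by (simp add: weighted_complex_def)
  then obtain \<sigma> where \<sigma>: "\<sigma> \<in> Cplx w" and max: "(\<Sum>i\<in>I. count \<sigma> i) = aI (Cplx w) I"
    using aI_attained[OF weighted_complex_finite[OF wc]] by blast
  have "?m \<sigma> \<in> Poly_Mapping.keys (Fcx n w)"
    unfolding keys_Fcx[OF wc] using \<sigma> by (rule imageI)
  moreover have "lk (?m \<sigma>) (X I) = 0"
    using I max by simp
  ultimately show False
    using ge by fastforce
qed

lemma Fcx_inj:
  assumes wc: "weighted_complex n d w" "weighted_complex n d' w'" and eq: "Fcx n w = Fcx n w'"
  shows "w = w'"
proof
  fix \<sigma>
  have Cplx: "Cplx w = Cplx w'"
    using y_mset_keys_Fcx[OF wc(1)] y_mset_keys_Fcx[OF wc(2)] eq by simp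
  show "w \<sigma> = w' \<sigma>"
  proof (cases "set_mset \<sigma> \<subseteq> pts n")
    case True
    then show ?thesis
      using lookup_Fcx[OF wc(1) True] lookup_Fcx[OF wc(2) True] eq Cplx by simp
  next
    case False
    then have "\<sigma> \<notin> Cplx w" "\<sigma> \<notin> Cplx w'"
      using weighted_complex_set wc by blast+
    then show ?thesis
      by (simp add: cplx_def)
  qed
qed

section \<open>Recovering the balanced complex from an element of the Cox ring\<close>

lemma int_count_y_mset: "admissible_exp n m \<Longrightarrow> int (count (y_mset n m) a) = lk m (Y a)"
  by (simp add: count_y_mset admissible_exp_def)

lemma int_size_y_mset: "admissible_exp n m \<Longrightarrow> int (size (y_mset n m)) = y_degree n m"
  by (simp add: size_eq_sum_count[OF set_y_mset] y_degree_def int_count_y_mset)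

lemma cmult_y_mset: "cmult n (y_mset n m) S = (\<Prod>a\<in>pts n. nat (lk m (Y a)) choose count S a)"
  unfolding cmult_def by (rule prod.cong) (simp_all add: count_y_mset)

lemma xyz_exp_cong: "(\<And>I. validI n I \<Longrightarrow> c I = c' I) \<Longrightarrow> xyz_exp n c = xyz_exp n c'"
  by (auto simp: xyz_exp_def validIs_def intro!: sum.cong ext)

definition weights_of :: "nat \<Rightarrow> (nat set \<Rightarrow> int) \<Rightarrow> 'a::comm_ring_1 lpoly \<Rightarrow> nat multiset \<Rightarrow> 'a" where
  "weights_of n c F \<sigma> = (if set_mset \<sigma> \<subseteq> pts n then Poly_Mapping.lookup F (xyz_exp n c \<sigma>) else 0)"

context
  fixes n :: nat and c :: "nat set \<Rightarrow> int" and F :: "'a::comm_ring_1 lpoly"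
  assumes adm: "\<And>m. m \<in> Poly_Mapping.keys F \<Longrightarrow> admissible_exp n m"
    and exc: "\<And>m. m \<in> Poly_Mapping.keys F \<Longrightarrow> exc_weight n m = c"
begin

lemma lookup_X_key:
  assumes m: "m \<in> Poly_Mapping.keys F" and I: "validI n I"
  shows "lk m (X I) = c I - int (\<Sum>i\<in>I. count (y_mset n m) i)"
proof -
  have "exc_weight n m I = c I"
    using exc[OF m] by simp
  then show ?thesis
    using I by (simp add: exc_weight_def int_count_y_mset[OF adm[OF m]])
qed

lemma xyz_exp_y_mset:
  assumes m: "m \<in> Poly_Mapping.keys F"
  shows "xyz_exp n c (y_mset n m) = m"
proof (rule poly_mapping_eqI)
  fix v
  show "lk (xyz_exp n c (y_mset n m)) v = lk m v"
    using adm[OF m] lookup_X_key[OF m]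
    by (cases v) (auto simp: int_count_y_mset admissible_exp_def)
qed

lemma weights_of_y_mset: "m \<in> Poly_Mapping.keys F \<Longrightarrow> weights_of n c F (y_mset n m) = Poly_Mapping.lookup F m"
  using set_y_mset[of n m] by (simp add: weights_of_def xyz_exp_y_mset)

lemma inj_on_y_mset: "inj_on (y_mset n) (Poly_Mapping.keys F)"
  by (rule inj_on_inverseI[where g = "xyz_exp n c"]) (rule xyz_exp_y_mset)

lemma Cplx_weights_of: "Cplx (weights_of n c F) = y_mset n ` Poly_Mapping.keys F"
proof
  show "Cplx (weights_of n c F) \<subseteq> y_mset n ` Poly_Mapping.keys F"
  proof
    fix \<sigma> assume "\<sigma> \<in> Cplx (weights_of n c F)"
    then have "set_mset \<sigma> \<subseteq> pts n" "xyz_exp n c \<sigma> \<in> Poly_Mapping.keys F"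
      by (auto simp: cplx_def weights_of_def in_keys_iff split: if_splits)
    then show "\<sigma> \<in> y_mset n ` Poly_Mapping.keys F"
      by (metis image_eqI y_mset_xyz_exp)
  qed
  show "y_mset n ` Poly_Mapping.keys F \<subseteq> Cplx (weights_of n c F)"
    by (auto simp: cplx_def in_keys_iff weights_of_y_mset)
qed

lemma sum_weights_of:
  "(\<Sum>\<sigma>\<in>Cplx (weights_of n c F). lmono (weights_of n c F \<sigma>) (xyz_exp n c \<sigma>)) = F"
proof -
  have "(\<Sum>\<sigma>\<in>Cplx (weights_of n c F). lmono (weights_of n c F \<sigma>) (xyz_exp n c \<sigma>)) =
      (\<Sum>m\<in>Poly_Mapping.keys F. lmono (Poly_Mapping.lookup F m) m)"
    unfolding Cplx_weights_of by (simp add: sum.reindex[OF inj_on_y_mset] weights_of_y_mset xyz_exp_y_mset)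
  then show ?thesis
    by (simp add: sum_keys_lmono)
qed

lemma balanced_complex_weights_of:
  assumes F: "F \<noteq> 0" and deg: "\<And>m. m \<in> Poly_Mapping.keys F \<Longrightarrow> y_degree n m = int d"
    and rel: "\<And>S k. 1 \<le> k \<Longrightarrow> pairing (balance_test n c S k) F = 0"
  shows "balanced_complex n d (weights_of n c F)"
proof -
  let ?w = "weights_of n c F"
  have size: "size (y_mset n m) = d" if "m \<in> Poly_Mapping.keys F" for m
    using int_size_y_mset[OF adm[OF that]] deg[OF that] by simp
  have "weighted_complex n d ?w"
    using F size set_y_mset by (auto simp: weighted_complex_def Cplx_weights_of)
  moreover have "balanced_in_degree n ?w j" if j: "j < d" for j
    unfolding balanced_in_degree_def
  proof (intro allI impI)
    fix S :: "nat multiset" assume S: "size S = j \<and> set_mset S \<subseteq> pts n"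
    have "(\<Sum>\<sigma>\<in>Cplx ?w. of_nat (cmult n \<sigma> S) * ?w \<sigma>) =
        (\<Sum>m\<in>Poly_Mapping.keys F. Poly_Mapping.lookup F m * of_nat (cmult n (y_mset n m) S))"
      unfolding Cplx_weights_of by (simp add: sum.reindex[OF inj_on_y_mset] weights_of_y_mset mult.commute)
    also have "\<dots> = pairing (balance_test n c S (d - j)) F"
      unfolding pairing_def using S j
      by (intro sum.cong refl) (simp add: balance_test_def exc deg cmult_y_mset)
    also have "\<dots> = 0"
      using j by (intro rel) simp
    finally show "(\<Sum>\<sigma>\<in>Cplx ?w. of_nat (cmult n \<sigma> S) * ?w \<sigma>) = 0" .
  qed
  ultimately show ?thesis
    by (simp add: balanced_complex_def)
qed

lemma exc_weight_eq_aI: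
  assumes F: "F \<in> Cox n" "F \<noteq> 0" and nd: "\<not> divisible_by_exceptional n F" and I: "validI n I"
  shows "c I = int (aI (Cplx (weights_of n c F)) I)"
proof -
  let ?\<Delta> = "Cplx (weights_of n c F)"
  have fin: "finite ?\<Delta>"
    by (simp add: Cplx_weights_of)
  obtain m where m: "m \<in> Poly_Mapping.keys F" and "(\<Sum>i\<in>I. count (y_mset n m) i) = aI ?\<Delta> I"
    using aI_attained[OF fin] F(2) unfolding Cplx_weights_of by fastforce
  moreover have "0 \<le> lk m (X I)"
    using F(1) m by (simp add: Cox_def in_P_def)
  ultimately have ge: "int (aI ?\<Delta> I) \<le> c I"
    using lookup_X_key[OF m I] by simp
  obtain m' where m': "m' \<in> Poly_Mapping.keys F" and "lk m' (X I) < 1"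
    using divisible_by_exceptionalI[OF F(1) I] nd by force
  moreover have "(\<Sum>i\<in>I. count (y_mset n m') i) \<le> aI ?\<Delta> I"
    using sum_count_le_aI[OF fin] m' by (simp add: Cplx_weights_of)
  ultimately show ?thesis
    using ge lookup_X_key[OF m' I] by linarith
qed

end

lemma Cox_element_eq_Fcx:
  assumes F: "F \<in> Cox n" "F \<noteq> 0" and hom: "homogeneous_deg n d F"
    and nd: "\<not> divisible_by_exceptional n F"
  obtains w where "balanced_complex n d w" "Fcx n w = F"
proof -
  have bal: "balanced_lpoly n F"
    using F(1) by (simp add: Cox_def balanced_lpoly_cox_alg)
  then have adm: "\<And>m. m \<in> Poly_Mapping.keys F \<Longrightarrow> admissible_exp n m"
    and rel: "\<And>c S k. 1 \<le> k \<Longrightarrow> pairing (balance_test n c S k) F = 0"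
    by (auto simp: balanced_lpoly_def)
  obtain c where deg: "\<And>m. m \<in> Poly_Mapping.keys F \<Longrightarrow> y_degree n m = int d"
    and exc: "\<And>m. m \<in> Poly_Mapping.keys F \<Longrightarrow> exc_weight n m = c"
    using homogeneous_deg_weights[OF hom] by metis
  let ?w = "weights_of n c F"
  have "balanced_complex n d ?w"
    using balanced_complex_weights_of[OF adm exc F(2) deg rel] .
  moreover have "xyz_exp n (\<lambda>I. int (aI (Cplx ?w) I)) = xyz_exp n c"
    using exc_weight_eq_aI[OF adm exc F nd] by (intro xyz_exp_cong) simp
  then have "Fcx n ?w = F"
    using sum_weights_of[OF adm exc] by (simp add: Fcx_eq_sum)
  ultimately show ?thesis
    using that by blast
qed

theorem mainTheorem2:
  fixes n d :: nat
  assumes "5 \<le> n" and "1 \<le> d"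
  shows "bij_betw (Fcx n)
           {w :: nat multiset \<Rightarrow> 'a::comm_ring_1. balanced_complex n d w}
           {F. F \<in> Cox n \<and> F \<noteq> 0 \<and> homogeneous_deg n d F \<and> \<not> divisible_by_exceptional n F}
       \<and> (\<forall>w :: nat multiset \<Rightarrow> 'a. balanced_complex n d w \<longrightarrow>
            homogeneous_of_class n (D_class n d (Cplx w)) (Fcx n w))"
proof -
  let ?B = "{w :: nat multiset \<Rightarrow> 'a. balanced_complex n d w}"
  let ?C = "{F. F \<in> Cox n \<and> F \<noteq> 0 \<and> homogeneous_deg n d F \<and> \<not> divisible_by_exceptional n F}"
  have wc: "weighted_complex n d w" if "w \<in> ?B" for w
    using that by (simp add: balanced_complex_def)
  have into: "Fcx n w \<in> ?C" if "w \<in> ?B" for w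
    using that assms(1) Fcx_in_Cox[of n d w] Fcx_nonzero[OF wc] Fcx_not_divisible[OF wc]
      Fcx_homogeneous_deg[OF wc] by simp
  have onto: "F \<in> Fcx n ` ?B" if F: "F \<in> ?C" for F
  proof -
    obtain w where "balanced_complex n d w" "Fcx n w = F"
      using F by (elim CollectE conjE Cox_element_eq_Fcx)
    then show ?thesis
      by blast
  qed
  have "Fcx n ` ?B = ?C"
    by (rule equalityI, rule image_subsetI, erule into, rule subsetI, erule onto)
  moreover have "inj_on (Fcx n) ?B"
    by (rule inj_onI) (use Fcx_inj wc in blast)
  ultimately show ?thesis
    using Fcx_homogeneous wc by (simp add: bij_betw_def) blast
qed

end
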